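(* There is an absolute constant $C>0$ such that the following holds. Let $Q(z)=\sum_{j=0}^n b_jz^j$ be a polynomial with complex coefficients such that $|b_0|=1$ and $|b_j|\le M$ for all $j$. Let $0<\nu_1\le1$, and let $A$ be the arc of the circle $\partial D_{\nu_1}(1-\nu_1)$ (center $1-\nu_1$, radius $\nu_1$) with central angle $0<\theta<\pi$ that is symmetric with respect to the real axis and passes through the point $1$. Then there is some $w\in A$ such that $$|Q(w)|\ge(2M)^{-C/(\nu_1\theta)}.$$
   Context: Note $M\ge|b_0|=1$. *)

theory Defs
  imports "HOL-Analysis.Analysis" "HOL-Computational_Algebra.Polynomial"
begin

definition circ_arc :: "real \<Rightarrow> real \<Rightarrow> complex set" where
  "circ_arc nu theta =
     {complex_of_real (1 - nu) + complex_of_real nu * cis t | t. -theta/2 \<le> t \<and> t \<le> theta/2}"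

end

theory Submission
  imports Defs "HOL-Complex_Analysis.Conformal_Mappings"
begin

text \<open>
  The core is a two-constants estimate on a lune. A Moebius map sends the unit disc onto the
  upper half-plane and the arc \<open>{|u| = 1, Re u \<ge> cos a}\<close> onto the negative reals; after a
  small rotation the preimage of the upper half-plane is a lune bounded by this arc and by an
  inner circular arc through \<open>exp(\<plusminus>ia)\<close>. If \<open>|f u| (1 - |u|) \<le> K\<close> on the disc and
  \<open>|f| \<le> m\<close> on the arc, then \<open>f u (u - exp(ia)) (u - exp(-ia)) exp(-i\<mu> log(rotated Moebius u))\<close>
  is at most \<open>18 K\<close> on the inner arc, where the logarithm is real and the quadratic factor is
  \<open>O(1 - |u|)\<close>, and at most \<open>4 m exp(\<mu>\<pi>)\<close> on the arc, while for \<open>|u| \<le> 1/2\<close> it is at least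
  \<open>|f u| exp(\<mu> sin a / 13) / 4\<close>. Optimising \<open>\<mu>\<close> shows that \<open>f\<close> cannot be small on the whole arc.

  The coefficient bound gives \<open>|Q z| (1 - |z|) \<le> M\<close>. Applied to \<open>Q((1 - \<nu>) u)\<close> with
  \<open>|Q 0| = 1\<close> and half-angle \<open>\<nu>/2\<close>, this produces a point \<open>z\<^sub>0\<close> within \<open>\<nu>/2\<close> of the centre
  \<open>1 - \<nu>\<close> with \<open>-log |Q z\<^sub>0| = O(log(2M) / \<nu>)\<close>; applied again to \<open>Q(1 - \<nu> + \<nu> u)\<close>, starting
  from \<open>z\<^sub>0\<close>, with half-angle \<open>\<theta>/2\<close>, it produces the required point of \<open>A\<close>.
\<close>

lemma Im_div_norm_le_Arg:
  fixes z :: complex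
  assumes "0 \<le> Im z" "z \<noteq> 0"
  shows "Im z / cmod z \<le> Arg z"
  using sin_Arg[OF assms(2)] sin_x_le_x[of "Arg z"] Arg_less_0[of z] assms(1) by simp

lemma continuous_within_if_dominated_vanishing:
  fixes f :: "'a::t2_space \<Rightarrow> 'b::real_normed_vector"
    and g :: "'a \<Rightarrow> 'c::real_normed_vector"
  assumes "continuous (at x within S) g" "\<And>y. norm (f y) \<le> norm (g y)" "g x = 0" "f x = 0"
  shows "continuous (at x within S) f"
proof -
  have "(g \<longlongrightarrow> 0) (at x within S)"
    using assms(1,3) by (simp add: continuous_within)
  then have "((\<lambda>y. norm (g y)) \<longlongrightarrow> 0) (at x within S)"
    by (rule tendsto_norm_zero)
  then have "(f \<longlongrightarrow> 0) (at x within S)"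
    by (rule Lim_null_comparison[rotated]) (simp add: assms(2))
  then show ?thesis
    using assms(4) by (simp add: continuous_within)
qed

lemma one_minus_cos_le: "1 - cos x \<le> (x::real)\<^sup>2 / 2"
proof -
  have "(sin (x/2))\<^sup>2 \<le> (x/2)\<^sup>2"
    using abs_sin_x_le_abs_x[of "x/2"] abs_le_square_iff by blast
  moreover have "cos x = 1 - 2 * (sin (x/2))\<^sup>2"
    using cos_double_sin[of "x/2"] by simp
  ultimately show ?thesis
    by (simp add: power_divide)
qed

lemma sin_ge_cubic:
  fixes x :: real
  assumes "0 \<le> x"
  shows "x - x^3/6 \<le> sin x"
proof -
  have "(\<lambda>t. sin t - t + t^3/6) 0 \<le> (\<lambda>t. sin t - t + t^3/6) x"
  proof (rule DERIV_nonneg_imp_nondecreasing[OF assms])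
    fix y :: real
    have "DERIV (\<lambda>t. sin t - t + t^3/6) y :> cos y - 1 + y\<^sup>2/2"
      by (auto intro!: derivative_eq_intros simp: power2_eq_square)
    moreover have "0 \<le> cos y - 1 + y\<^sup>2/2"
      using one_minus_cos_le[of y] by linarith
    ultimately show "\<exists>d. DERIV (\<lambda>t. sin t - t + t^3/6) y :> d \<and> 0 \<le> d"
      by blast
  qed
  then show ?thesis
    by simp
qed

lemma sin_ge_third:
  fixes x :: real
  assumes "0 \<le> x" "x \<le> 2"
  shows "x / 3 \<le> sin x"
proof -
  have "x * x\<^sup>2 \<le> x * 2\<^sup>2"
    using assms by (intro mult_left_mono power_mono) auto
  then have "x^3 \<le> 4 * x"
    by (simp add: power3_eq_cube power2_eq_square)
  then show ?thesis
    using sin_ge_cubic[OF assms(1)] by linarith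
qed

lemma divide_sin_half_le:
  fixes c x :: real
  assumes "0 \<le> c" "0 < x" "x \<le> 4"
  shows "c / sin (x/2) \<le> 6 * c / x"
proof -
  have "x / 6 \<le> sin (x/2)"
    using sin_ge_third[of "x/2"] assms by simp
  then have "c / sin (x/2) \<le> c / (x / 6)"
    using assms by (intro divide_left_mono) auto
  then show ?thesis
    by (simp add: mult.commute)
qed

lemma norm_minus_one_le_if_cos_le:
  assumes "cmod u = 1" "cos t \<le> Re u"
  shows "cmod (u - 1) \<le> \<bar>t\<bar>"
proof -
  have "(cmod (u - 1))\<^sup>2 = (Re u - 1)\<^sup>2 + (Im u)\<^sup>2"
    by (simp add: cmod_power2)
  also have "\<dots> = ((Re u)\<^sup>2 + (Im u)\<^sup>2) - 2 * Re u + 1"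
    by (simp add: power2_eq_square algebra_simps)
  also have "\<dots> = (cmod u)\<^sup>2 - 2 * Re u + 1"
    by (simp only: cmod_power2)
  also have "\<dots> \<le> 2 * (1 - cos t)"
    using assms by simp
  also have "\<dots> \<le> \<bar>t\<bar>\<^sup>2"
    using one_minus_cos_le[of t] by simp
  finally show ?thesis
    by (rule power2_le_imp_le) simp
qed

lemma unit_circle_eq_cis_if_cos_le:
  assumes "cmod u = 1" "cos s \<le> Re u" "0 \<le> s" "s \<le> pi"
  shows "\<exists>t. u = cis t \<and> - s \<le> t \<and> t \<le> s"
proof -
  have "u \<noteq> 0"
    using assms(1) by auto
  then have u: "u = cis (Arg u)"
    using cis_Arg[of u] assms(1) by (simp add: sgn_div_norm)
  then have "cos s \<le> cos \<bar>Arg u\<bar>"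
    using assms(2) by (metis cis.sel(1) cos_abs_real)
  then have "\<bar>Arg u\<bar> \<le> s"
    using cos_mono_le_eq[of s "\<bar>Arg u\<bar>"] assms(3,4) Arg_bounded[of u] by auto
  then show ?thesis
    using u by (intro exI[of _ "Arg u"]) auto
qed

lemma ln_rescaled_ratio_le:
  fixes M nu y A :: real
  assumes M: "1 \<le> M" and nu: "0 < nu" "nu \<le> 1"
    and y: "0 < y" "- ln y \<le> A * ln (2 * M) / nu"
  shows "ln (72 * M / (nu * y)) \<le> (A + 9) * ln (2 * M) / nu"
proof -
  define \<Lambda> where "\<Lambda> = ln (2 * M)"
  have \<Lambda>: "ln 2 \<le> \<Lambda>"
    using M by (simp add: \<Lambda>_def)
  then have \<Lambda>_half: "1/2 \<le> \<Lambda>"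
    using ln2_ge_two_thirds by linarith
  have "ln (36::real) \<le> ln (2^6)"
    by simp
  also have "\<dots> = 6 * ln 2"
    using ln_realpow[of "2::real" 6] by simp
  finally have "ln 36 + \<Lambda> \<le> 7 * \<Lambda>"
    using \<Lambda> by linarith
  also have "\<dots> \<le> 7 * \<Lambda> / nu"
    using \<Lambda>_half nu by (simp add: le_divide_eq mult_left_le)
  finally have "ln 36 + \<Lambda> \<le> 7 * \<Lambda> / nu" .
  moreover have "- ln nu \<le> 2 * \<Lambda> / nu"
    using ln_le_minus_one[of "1/nu"] \<Lambda>_half nu by (simp add: ln_div field_simps)
  moreover have "7 * \<Lambda> / nu + 2 * \<Lambda> / nu + A * \<Lambda> / nu = (A + 9) * \<Lambda> / nu"
    using nu(1) by (simp add: field_simps)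
  moreover have "ln (72 * M / (nu * y)) = ln (36 * (2 * M)) - ln (nu * y)"
    using M nu y by (simp add: ln_div)
  moreover have "\<dots> = ln 36 + \<Lambda> - ln nu - ln y"
    using M nu y ln_mult_pos[of 36 "2 * M"] ln_mult_pos[of nu y] unfolding \<Lambda>_def by simp
  ultimately show ?thesis
    using y(2) unfolding \<Lambda>_def by linarith
qed

lemma norm_poly_mult_one_minus_norm_le:
  fixes Q :: "complex poly"
  assumes coeff: "\<And>j. cmod (coeff Q j) \<le> M" and z: "cmod z < 1"
  shows "cmod (poly Q z) * (1 - cmod z) \<le> M"
proof -
  have "0 \<le> M"
    using coeff[of 0] norm_ge_zero order_trans by blast
  have "cmod (poly Q z) \<le> (\<Sum>i\<le>degree Q. cmod (coeff Q i * z ^ i))"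
    unfolding poly_altdef by (rule norm_sum)
  also have "\<dots> \<le> (\<Sum>i\<le>degree Q. M * cmod z ^ i)"
    by (intro sum_mono) (simp add: norm_mult norm_power mult_right_mono coeff)
  also have "\<dots> = M * (\<Sum>i\<le>degree Q. cmod z ^ i)"
    by (simp add: sum_distrib_left)
  finally have "cmod (poly Q z) * (1 - cmod z) \<le> M * (\<Sum>i\<le>degree Q. cmod z ^ i) * (1 - cmod z)"
    using z by (intro mult_right_mono) auto
  also have "\<dots> = M * ((1 - cmod z) * (\<Sum>i\<le>degree Q. cmod z ^ i))"
    by (simp only: ac_simps)
  also have "\<dots> = M * (1 - cmod z ^ Suc (degree Q))"
    by (simp only: sum_gp_basic)
  also have "\<dots> \<le> M"
    using \<open>0 \<le> M\<close> by (simp add: mult_left_le)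
  finally show ?thesis .
qed

lemma norm_poly_affine_mult_one_minus_norm_le:
  fixes Q :: "complex poly"
  assumes coeff: "\<And>j. cmod (coeff Q j) \<le> M"
    and "0 \<le> c" "0 < r" "c + r \<le> 1" and u: "cmod u < 1"
  shows "cmod (poly Q (of_real c + of_real r * u)) * (1 - cmod u) \<le> M / r"
proof -
  define z where "z = of_real c + of_real r * u"
  have "cmod z \<le> c + r * cmod u"
    using norm_triangle_ineq[of "of_real c" "of_real r * u"] assms(2,3)
    by (simp add: z_def norm_mult)
  moreover have "r * cmod u < r"
    using u assms(3) by simp
  ultimately have "cmod z < 1" and "r * (1 - cmod u) \<le> 1 - cmod z"
    using assms(4) by (simp_all add: algebra_simps)
  then have "r * (cmod (poly Q z) * (1 - cmod u)) \<le> cmod (poly Q z) * (1 - cmod z)"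
    by (metis mult.left_commute mult_left_mono norm_ge_zero)
  also have "\<dots> \<le> M"
    by (rule norm_poly_mult_one_minus_norm_le[OF coeff \<open>cmod z < 1\<close>])
  finally show ?thesis
    using assms(3) by (simp add: z_def field_simps)
qed

locale arc_lune =
  fixes a :: real
  assumes a_pos: "0 < a" and a_less_pi: "a < pi"
begin

text \<open>
  \<open>mobius\<close> maps the unit disc onto the upper half-plane and the arc \<open>{|u| = 1, Re u \<ge> cos a}\<close>
  onto the negative reals; \<open>cayley u = |u - cnj (cis a)|\<^sup>2 * mobius u\<close> has the same argument
  and explicit real and imaginary parts. The rotation \<open>rot\<close> by the angle \<open>-arcsin tilt\<close> turns
  the preimage of the upper half-plane into the lune between that arc and an inner circular arc
  through \<open>cis a\<close> and \<open>cnj (cis a)\<close>, on which \<open>Arg (cayley u * rot) = 0\<close>.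
\<close>

definition cayley :: "complex \<Rightarrow> complex" where
  "cayley u = cnj (cis a) * (u - cis a) * (cnj u - cis a)"

definition mobius :: "complex \<Rightarrow> complex" where
  "mobius u = cnj (cis a) * (u - cis a) / (u - cnj (cis a))"

definition tilt :: real where
  "tilt = sin a / 8"

definition rot :: complex where
  "rot = Complex (sqrt (1 - tilt\<^sup>2)) (- tilt)"

definition lune :: "complex set" where
  "lune = {u. cmod u < 1 \<and> 0 < Im (cayley u * rot)}"

definition weight :: "real \<Rightarrow> complex \<Rightarrow> complex" where
  "weight \<mu> u = exp (- (\<i> * of_real \<mu>) * Ln (mobius u * rot))"

lemma sin_a_pos: "0 < sin a"
  using sin_gt_zero a_pos a_less_pi by blast

lemma tilt_pos: "0 < tilt" and tilt_le: "tilt \<le> 1/8"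
  using sin_a_pos by (auto simp: tilt_def)

lemma Re_rot_ge: "99/100 \<le> Re rot" and Re_rot_le: "Re rot \<le> 1"
proof -
  have "tilt\<^sup>2 \<le> (1/8)\<^sup>2"
    using tilt_pos tilt_le by (intro power_mono) auto
  then have "(99/100)\<^sup>2 \<le> 1 - tilt\<^sup>2"
    by (simp add: power2_eq_square)
  then show "99/100 \<le> Re rot"
    using real_sqrt_le_mono by (fastforce simp: rot_def)
  show "Re rot \<le> 1"
    by (simp add: rot_def)
qed

lemma norm_rot: "cmod rot = 1"
proof -
  have "tilt\<^sup>2 \<le> 1"
    using tilt_pos tilt_le by (simp add: power_le_one)
  then show ?thesis
    by (simp add: rot_def cmod_def)
qed

lemma Re_cayley: "Re (cayley u) = (cmod u ^ 2 + 1) * cos a - 2 * Re u"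
  and Im_cayley: "Im (cayley u) = sin a * (1 - cmod u ^ 2)"
proof -
  have "sin a * sin a + cos a * cos a = 1"
    by (metis sin_cos_squared_add power2_eq_square)
  then have "Re u * (cos a * cos a) + Re u * (sin a * sin a) = Re u"
    and "Im u * (cos a * cos a) + Im u * (sin a * sin a) = Im u"
    by (metis distrib_left mult.right_neutral add.commute)+
  then show "Re (cayley u) = (cmod u ^ 2 + 1) * cos a - 2 * Re u"
    and "Im (cayley u) = sin a * (1 - cmod u ^ 2)"
    unfolding cmod_power2 by (simp_all add: cayley_def algebra_simps power2_eq_square)
qed

lemma Im_rot [simp]: "Im rot = - tilt"
  by (simp add: rot_def)

lemma norm_cayley: "cmod (cayley u) = cmod ((u - cis a) * (u - cnj (cis a)))"
proof -
  have "cmod (cnj u - cis a) = cmod (u - cnj (cis a))"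
    by (metis complex_cnj_cnj complex_cnj_diff complex_mod_cnj)
  then show ?thesis
    by (simp add: cayley_def norm_mult)
qed

lemma cayley_eq_0_iff: "cayley u = 0 \<longleftrightarrow> u = cis a \<or> u = cnj (cis a)"
  using norm_cayley[of u] by auto

lemma mobius_rot_eq: "mobius u * rot = cayley u * rot / of_real (cmod (u - cnj (cis a)) ^ 2)"
  unfolding mobius_def cayley_def
  by (subst complex_div_cnj) (simp add: mult.assoc)

lemma cayley_rot_notin_nonpos_Reals:
  assumes "cmod u \<le> 1" "0 \<le> Im (cayley u * rot)" "cayley u \<noteq> 0"
  shows "cayley u * rot \<notin> \<real>\<^sub>\<le>\<^sub>0"
proof
  assume "cayley u * rot \<in> \<real>\<^sub>\<le>\<^sub>0"
  then have im: "Im (cayley u) * Re rot = Re (cayley u) * tilt"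
    and re: "Re (cayley u) * Re rot + Im (cayley u) * tilt \<le> 0"
    by (auto simp: complex_nonpos_Reals_iff algebra_simps)
  have "cmod u ^ 2 \<le> 1"
    using assms(1) by (simp add: power_le_one)
  then have Y: "0 \<le> Im (cayley u)"
    using sin_a_pos by (simp add: Im_cayley)
  then have "0 \<le> Re (cayley u) * tilt"
    unfolding im[symmetric] using Y Re_rot_ge by simp
  then have X: "0 \<le> Re (cayley u)"
    using tilt_pos by (simp add: zero_le_mult_iff)
  have "0 \<le> Re (cayley u) * Re rot" "0 \<le> Im (cayley u) * tilt"
    using X Y Re_rot_ge tilt_pos by simp_all
  then have "Re (cayley u) * Re rot = 0" "Im (cayley u) * tilt = 0"
    using re by linarith+
  then have "cayley u = 0"
    using Re_rot_ge tilt_pos by (simp add: complex_eq_iff)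
  with assms(3) show False ..
qed

lemma mobius_rot_notin_nonpos_Reals:
  assumes "cmod u \<le> 1" "0 \<le> Im (cayley u * rot)" "u \<noteq> cis a" "u \<noteq> cnj (cis a)"
  shows "mobius u * rot \<notin> \<real>\<^sub>\<le>\<^sub>0"
proof -
  have r: "0 < cmod (u - cnj (cis a)) ^ 2"
    using assms(4) by simp
  have "cayley u * rot \<notin> \<real>\<^sub>\<le>\<^sub>0"
    using cayley_rot_notin_nonpos_Reals assms cayley_eq_0_iff by blast
  then show ?thesis
    using r unfolding mobius_rot_eq
    by (auto simp: complex_nonpos_Reals_iff divide_le_0_iff)
qed

lemma Re_ge_cos_if_outer_arc:
  assumes "cmod z = 1" "0 \<le> Im (cayley z * rot)"
  shows "cos a \<le> Re z"
proof -
  have "Im (cayley z) = 0"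
    using assms(1) by (simp add: Im_cayley)
  then have "Re (cayley z) * tilt \<le> 0"
    using assms(2) by (simp add: algebra_simps)
  then have "Re (cayley z) \<le> 0"
    using tilt_pos by (simp add: mult_le_0_iff)
  then show ?thesis
    using assms(1) by (simp add: Re_cayley)
qed

lemma
  assumes "cmod z < 1" "Im (cayley z * rot) = 0"
  shows inner_arc_Arg: "Arg (cayley z * rot) = 0"
    and inner_arc_norm_cayley: "cmod (cayley z) \<le> 18 * (1 - cmod z)"
proof -
  have z2: "cmod z ^ 2 < 1"
    using assms(1) by (simp add: power_less_one_iff)
  have Y: "0 < Im (cayley z)"
    using sin_a_pos z2 by (simp add: Im_cayley)
  have YX: "Im (cayley z) * Re rot = Re (cayley z) * tilt"
    using assms(2) by (simp add: algebra_simps)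
  have "0 \<le> Re (cayley z) * tilt"
    unfolding YX[symmetric] using Y Re_rot_ge by simp
  then have X: "0 \<le> Re (cayley z)"
    using tilt_pos by (simp add: zero_le_mult_iff)
  have "0 < Re (cayley z * rot)"
    using X Y Re_rot_ge tilt_pos by (simp add: add_nonneg_pos)
  then show "Arg (cayley z * rot) = 0"
    using assms(2) by (simp add: Arg_eq_0 complex_is_Real_iff)
  have "Re (cayley z) * tilt \<le> Im (cayley z)"
    unfolding YX[symmetric] using Y Re_rot_le by (simp add: mult_left_le)
  also have "Im (cayley z) = (8 * (1 - cmod z ^ 2)) * tilt"
    by (simp add: Im_cayley tilt_def)
  finally have X8: "Re (cayley z) \<le> 8 * (1 - cmod z ^ 2)"
    using tilt_pos by simp
  have "Im (cayley z) \<le> 1 - cmod z ^ 2"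
    unfolding Im_cayley using sin_a_pos z2 by (intro mult_left_le_one_le) auto
  then have "cmod (cayley z) \<le> 9 * (1 - cmod z ^ 2)"
    using cmod_le[of "cayley z"] X X8 Y by simp
  also have "\<dots> = 18 * (1 - cmod z) - 9 * (1 - cmod z)\<^sup>2"
    by (simp add: power2_eq_square algebra_simps)
  also have "\<dots> \<le> 18 * (1 - cmod z)"
    by simp
  finally show "cmod (cayley z) \<le> 18 * (1 - cmod z)" .
qed

lemma
  assumes "cmod u \<le> 1/2"
  shows centre_in_lune: "u \<in> lune"
    and centre_Arg_ge: "sin a / 13 \<le> Arg (cayley u * rot)"
proof -
  have u2: "cmod u ^ 2 \<le> 1/4"
    using power_mono[OF assms, of 2] by (simp add: power2_eq_square)
  have Y: "3/4 * sin a \<le> Im (cayley u)" "Im (cayley u) \<le> 1"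
    using sin_a_pos u2 by (simp_all add: Im_cayley mult_le_one)
  have "(cmod u ^ 2 + 1) * \<bar>cos a\<bar> \<le> 5/4 * 1"
    using u2 by (intro mult_mono) auto
  then have "\<bar>(cmod u ^ 2 + 1) * cos a\<bar> \<le> 5/4"
    by (simp add: abs_mult)
  moreover have "\<bar>Re u\<bar> \<le> 1/2"
    using abs_Re_le_cmod[of u] assms by linarith
  ultimately have X: "\<bar>Re (cayley u)\<bar> \<le> 9/4"
    unfolding Re_cayley by arith
  have "3/4 * sin a * (99/100) \<le> Im (cayley u) * Re rot"
    using Y Re_rot_ge sin_a_pos by (intro mult_mono) auto
  moreover have "Re (cayley u) * tilt \<le> 9/4 * tilt"
    using X tilt_pos by (intro mult_right_mono) auto
  moreover have "Im (cayley u * rot) = Im (cayley u) * Re rot - Re (cayley u) * tilt"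
    by simp
  ultimately have im: "sin a / 4 \<le> Im (cayley u * rot)"
    using tilt_def sin_a_pos by linarith
  then show "u \<in> lune"
    using assms sin_a_pos by (simp add: lune_def)
  have "cmod (cayley u * rot) \<le> 13/4"
    using cmod_le[of "cayley u"] X Y sin_a_pos by (simp add: norm_mult norm_rot)
  then have "(sin a / 4) / (13/4) \<le> Im (cayley u * rot) / cmod (cayley u * rot)"
    using im sin_a_pos norm_rot by (intro frac_le) auto
  also have "\<dots> \<le> Arg (cayley u * rot)"
    using im sin_a_pos norm_rot by (intro Im_div_norm_le_Arg) auto
  finally show "sin a / 13 \<le> Arg (cayley u * rot)"
    by simp
qed

lemma norm_weight:
  assumes "u \<noteq> cis a" "u \<noteq> cnj (cis a)"
  shows "cmod (weight \<mu> u) = exp (\<mu> * Arg (cayley u * rot))"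
proof -
  have r: "0 < cmod (u - cnj (cis a)) ^ 2"
    using assms(2) by simp
  have "cayley u \<noteq> 0"
    using assms cayley_eq_0_iff by blast
  moreover have "rot \<noteq> 0"
    using norm_rot by (metis norm_zero zero_neq_one)
  ultimately have "cayley u * rot \<noteq> 0"
    by simp
  then have "mobius u * rot \<noteq> 0"
    using r unfolding mobius_rot_eq by simp
  then have "Im (Ln (mobius u * rot)) = Arg (mobius u * rot)"
    by (simp add: Arg_eq_Im_Ln)
  also have "\<dots> = Arg (cayley u * rot)"
    unfolding mobius_rot_eq by (rule Arg_divide_of_real[OF r])
  finally show ?thesis
    by (simp add: weight_def)
qed

lemma norm_weight_le:
  assumes "0 \<le> \<mu>" "u \<noteq> cis a" "u \<noteq> cnj (cis a)"
  shows "cmod (weight \<mu> u) \<le> exp (\<mu> * pi)"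
  using norm_weight[OF assms(2,3)] Arg_le_pi mult_left_mono[OF _ assms(1)] by simp

lemma holomorphic_weight: "weight \<mu> holomorphic_on lune"
proof -
  have pq: "u \<noteq> cis a" "u \<noteq> cnj (cis a)" if "u \<in> lune" for u
    using that by (auto simp: lune_def)
  have "mobius u * rot \<notin> \<real>\<^sub>\<le>\<^sub>0" if "u \<in> lune" for u
    using mobius_rot_notin_nonpos_Reals pq[OF that] that by (simp add: lune_def)
  moreover have "(\<lambda>u. mobius u * rot) holomorphic_on lune"
    unfolding mobius_def using pq by (intro holomorphic_intros) auto
  ultimately have "(\<lambda>u. Ln (mobius u * rot)) holomorphic_on lune"
    by (rule holomorphic_on_Ln')
  then have "(\<lambda>u. - (\<i> * of_real \<mu>) * Ln (mobius u * rot)) holomorphic_on lune"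
    by (intro holomorphic_on_mult holomorphic_on_const)
  then show ?thesis
    unfolding weight_def by (rule holomorphic_on_exp')
qed

lemma isCont_weight:
  assumes "cmod u \<le> 1" "0 \<le> Im (cayley u * rot)" "u \<noteq> cis a" "u \<noteq> cnj (cis a)"
  shows "isCont (weight \<mu>) u"
  using mobius_rot_notin_nonpos_Reals[OF assms] assms(4)
  unfolding weight_def mobius_def by (intro continuous_intros) auto

lemma open_lune: "open lune"
  unfolding lune_def cayley_def by (intro open_Collect_conj open_Collect_less continuous_intros)

lemma bounded_lune: "bounded lune"
  by (rule bounded_subset[OF bounded_ball[of 0 1]]) (auto simp: lune_def)

lemma closure_lune_subset: "closure lune \<subseteq> {u. cmod u \<le> 1 \<and> 0 \<le> Im (cayley u * rot)}"
proof (rule closure_minimal)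
  show "lune \<subseteq> {u. cmod u \<le> 1 \<and> 0 \<le> Im (cayley u * rot)}"
    by (auto simp: lune_def)
  show "closed {u. cmod u \<le> 1 \<and> 0 \<le> Im (cayley u * rot)}"
    unfolding cayley_def by (intro closed_Collect_conj closed_Collect_le continuous_intros)
qed

lemma frontier_lune:
  assumes "z \<in> frontier lune"
  shows "cmod z \<le> 1" "0 \<le> Im (cayley z * rot)"
    and "cmod z = 1 \<or> cmod z < 1 \<and> Im (cayley z * rot) = 0"
proof -
  have "z \<in> closure lune" "z \<notin> lune"
    using assms open_lune by (auto simp: frontier_def interior_open)
  then show "cmod z \<le> 1" "0 \<le> Im (cayley z * rot)"
    and "cmod z = 1 \<or> cmod z < 1 \<and> Im (cayley z * rot) = 0"
    using closure_lune_subset by (auto simp: lune_def)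
qed

lemma continuous_on_closure_lune_mult_weight:
  assumes "0 \<le> \<mu>" and g: "\<And>x. isCont g x" "g (cis a) = 0" "g (cnj (cis a)) = 0"
  shows "continuous_on (closure lune) (\<lambda>u. g u * weight \<mu> u)"
  unfolding continuous_on_eq_continuous_within
proof
  fix x assume x: "x \<in> closure lune"
  show "continuous (at x within closure lune) (\<lambda>u. g u * weight \<mu> u)"
  proof (cases "x = cis a \<or> x = cnj (cis a)")
    case True
    \<comment> \<open>the weight jumps at these points, but it is bounded and \<open>g\<close> vanishes there\<close>
    have "isCont (\<lambda>u. g u * exp (\<mu> * pi)) x"
      by (intro isCont_mult g(1) continuous_const)
    then have cont: "continuous (at x within closure lune) (\<lambda>u. g u * exp (\<mu> * pi))"
      by (rule continuous_at_imp_continuous_within)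
    have dom: "cmod (g u * weight \<mu> u) \<le> cmod (g u * exp (\<mu> * pi))" for u
      using norm_weight_le[OF assms(1), of u] g(2,3)
      by (cases "u = cis a \<or> u = cnj (cis a)") (auto simp: norm_mult mult_left_mono)
    show ?thesis
      by (rule continuous_within_if_dominated_vanishing[OF cont dom]) (use True g(2,3) in auto)
  next
    case False
    then have "isCont (weight \<mu>) x"
      using x closure_lune_subset by (intro isCont_weight) auto
    then have "isCont (\<lambda>u. g u * weight \<mu> u) x"
      by (intro isCont_mult g(1))
    then show ?thesis
      by (rule continuous_at_imp_continuous_within)
  qed
qed

lemma frontier_lune_bound:
  assumes K: "\<And>u. cmod u < 1 \<Longrightarrow> cmod (f u) * (1 - cmod u) \<le> K"
    and m: "\<And>u. cmod u = 1 \<Longrightarrow> cos a \<le> Re u \<Longrightarrow> cmod (f u) \<le> m"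
    and \<mu>: "0 \<le> \<mu>" and z: "z \<in> frontier lune" "z \<noteq> cis a" "z \<noteq> cnj (cis a)"
  shows "cmod (f z) * cmod (cayley z) * cmod (weight \<mu> z) \<le> max (4 * m * exp (\<mu> * pi)) (18 * K)"
proof -
  consider "cmod z = 1" | "cmod z < 1" "Im (cayley z * rot) = 0"
    using frontier_lune[OF z(1)] by auto
  then show ?thesis
  proof cases
    case 1
    have "cmod (cayley z) \<le> 2 * 2"
      unfolding norm_cayley norm_mult using 1
      by (intro mult_mono norm_triangle_le_diff) auto
    moreover have "cmod (f z) \<le> m"
      using m Re_ge_cos_if_outer_arc frontier_lune[OF z(1)] 1 by blast
    moreover have "cmod (weight \<mu> z) \<le> exp (\<mu> * pi)"
      using norm_weight_le[OF \<mu> z(2,3)] .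
    moreover have "0 \<le> m"
      using \<open>cmod (f z) \<le> m\<close> norm_ge_zero order_trans by blast
    ultimately have "cmod (f z) * cmod (cayley z) * cmod (weight \<mu> z) \<le> m * 4 * exp (\<mu> * pi)"
      by (intro mult_mono) auto
    then show ?thesis
      by (simp add: mult_ac)
  next
    case 2
    have "cmod (f z) * cmod (cayley z) * cmod (weight \<mu> z) = cmod (f z) * cmod (cayley z)"
      using inner_arc_Arg[OF 2] by (simp add: norm_weight[OF z(2,3)])
    also have "\<dots> \<le> cmod (f z) * (18 * (1 - cmod z))"
      using mult_left_mono[OF inner_arc_norm_cayley[OF 2] norm_ge_zero] .
    also have "\<dots> = 18 * (cmod (f z) * (1 - cmod z))"
      by simp
    also have "\<dots> \<le> 18 * K"
      using K[OF 2(1)] by simp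
    finally show ?thesis
      by simp
  qed
qed

lemma norm_cayley_weight_centre_ge:
  assumes "0 \<le> \<mu>" "cmod u \<le> 1/2"
  shows "exp (\<mu> * (sin a / 13)) / 4 \<le> cmod (cayley u) * cmod (weight \<mu> u)"
proof -
  have u: "u \<noteq> cis a" "u \<noteq> cnj (cis a)"
    using assms(2) by auto
  have "1/2 * (1/2) \<le> cmod (u - cis a) * cmod (u - cnj (cis a))"
    using assms(2) norm_triangle_ineq3[of u "cis a"] norm_triangle_ineq3[of u "cnj (cis a)"]
    by (intro mult_mono) (auto simp: norm_minus_commute)
  then have "1/4 \<le> cmod (cayley u)"
    by (simp add: norm_cayley norm_mult)
  moreover have "exp (\<mu> * (sin a / 13)) \<le> cmod (weight \<mu> u)"
    using mult_left_mono[OF centre_Arg_ge[OF assms(2)] assms(1)] by (simp add: norm_weight[OF u])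
  ultimately have "1/4 * exp (\<mu> * (sin a / 13)) \<le> cmod (cayley u) * cmod (weight \<mu> u)"
    by (intro mult_mono) auto
  then show ?thesis
    by simp
qed

theorem lune_estimate:
  fixes f :: "complex \<Rightarrow> complex"
  assumes holf: "f holomorphic_on UNIV"
    and K: "\<And>u. cmod u < 1 \<Longrightarrow> cmod (f u) * (1 - cmod u) \<le> K"
    and m: "\<And>u. cmod u = 1 \<Longrightarrow> cos a \<le> Re u \<Longrightarrow> cmod (f u) \<le> m"
    and u0: "cmod u0 \<le> 1/2" and \<mu>: "0 \<le> \<mu>"
  shows "cmod (f u0) / 4 * exp (\<mu> * (sin a / 13)) \<le> max (4 * m * exp (\<mu> * pi)) (18 * K)"
proof -
  define F where "F u = f u * ((u - cis a) * (u - cnj (cis a))) * weight \<mu> u" for u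
  have norm_F: "cmod (F u) = cmod (f u) * cmod (cayley u) * cmod (weight \<mu> u)" for u
    by (simp add: F_def norm_mult norm_cayley)
  have "isCont (\<lambda>u. f u * ((u - cis a) * (u - cnj (cis a)))) x" for x
    using holomorphic_on_imp_continuous_on[OF holf]
    by (intro continuous_intros) (simp add: continuous_on_eq_continuous_at)
  then have contF: "continuous_on (closure lune) F"
    unfolding F_def by (rule continuous_on_closure_lune_mult_weight[OF \<mu>]) auto
  have "f holomorphic_on lune"
    using holomorphic_on_subset[OF holf] by blast
  then have holF: "F holomorphic_on interior lune"
    unfolding F_def interior_open[OF open_lune] by (intro holomorphic_intros holomorphic_weight)
  have "cmod (f 0) \<le> K"
    using K[of 0] by simp
  then have "0 \<le> K"
    by (rule order_trans[OF norm_ge_zero])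
  have frontier: "cmod (F z) \<le> max (4 * m * exp (\<mu> * pi)) (18 * K)" if "z \<in> frontier lune" for z
  proof (cases "z = cis a \<or> z = cnj (cis a)")
    case True
    then have "F z = 0"
      by (auto simp: F_def)
    then show ?thesis
      using \<open>0 \<le> K\<close> by simp
  next
    case False
    then show ?thesis
      using frontier_lune_bound[OF K m \<mu> that] unfolding norm_F by blast
  qed
  have "cmod (f u0) / 4 * exp (\<mu> * (sin a / 13)) \<le> cmod (F u0)"
    using mult_left_mono[OF norm_cayley_weight_centre_ge[OF \<mu> u0] norm_ge_zero[of "f u0"]]
    by (simp add: norm_F mult_ac)
  also have "\<dots> \<le> max (4 * m * exp (\<mu> * pi)) (18 * K)"
    by (rule maximum_modulus_frontier[OF holF contF bounded_lune frontier centre_in_lune[OF u0]])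
  finally show ?thesis .
qed

lemma two_constants:
  fixes f :: "complex \<Rightarrow> complex"
  assumes holf: "f holomorphic_on UNIV"
    and K: "\<And>u. cmod u < 1 \<Longrightarrow> cmod (f u) * (1 - cmod u) \<le> K"
    and m: "\<And>u. cmod u = 1 \<Longrightarrow> cos a \<le> Re u \<Longrightarrow> cmod (f u) \<le> m"
    and u0: "cmod u0 \<le> 1/2" and m_pos: "0 < m" and m_le: "2 * m \<le> 9 * K"
  shows "cmod (f u0) \<le> 72 * K * exp (- (ln (9 * K / (2 * m)) * sin a / (13 * pi)))"
proof -
  \<comment> \<open>the weight exponent that makes both boundary bounds of the lune estimate equal\<close>
  define \<mu> where "\<mu> = ln (9 * K / (2 * m)) / pi"
  have "1 \<le> 9 * K / (2 * m)"
    using m_pos m_le by simp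
  then have "0 \<le> \<mu>"
    by (simp add: \<mu>_def)
  have "exp (\<mu> * pi) = 9 * K / (2 * m)"
    using m_pos m_le by (simp add: \<mu>_def)
  then have "4 * m * exp (\<mu> * pi) = 18 * K"
    using m_pos by (simp add: field_simps)
  then have "cmod (f u0) / 4 * exp (\<mu> * (sin a / 13)) \<le> 18 * K"
    using lune_estimate[OF holf K m u0 \<open>0 \<le> \<mu>\<close>] by simp
  then have "cmod (f u0) \<le> 72 * K * exp (- (\<mu> * (sin a / 13)))"
    by (simp add: exp_minus field_simps)
  moreover have "\<mu> * (sin a / 13) = ln (9 * K / (2 * m)) * sin a / (13 * pi)"
    by (simp add: \<mu>_def)
  ultimately show ?thesis
    by (simp only:)
qed

end

lemma holomorphic_large_on_arc:
  fixes f :: "complex \<Rightarrow> complex"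
  assumes holf: "f holomorphic_on UNIV" and a: "0 < a" "a < pi"
    and K: "\<And>u. cmod u < 1 \<Longrightarrow> cmod (f u) * (1 - cmod u) \<le> K"
    and u0: "cmod u0 \<le> 1/2" and nz: "f u0 \<noteq> 0"
  shows "\<exists>u. cmod u = 1 \<and> cos a \<le> Re u \<and>
           2 * K * (cmod (f u0) / (72 * K)) powr (13 * pi / sin a) \<le> cmod (f u)"
proof (rule ccontr)
  interpret arc_lune a
    using a by unfold_locales
  assume contra: "\<not> ?thesis"
  define X where "X = cmod (f u0) / (72 * K)"
  define m where "m = 2 * K * X powr (13 * pi / sin a)"
  have "cmod (f u0) * (1/2) \<le> cmod (f u0) * (1 - cmod u0)"
    using u0 by (intro mult_left_mono) auto
  then have f_u0: "cmod (f u0) \<le> 2 * K" "0 < cmod (f u0)"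
    using K[of u0] u0 nz by (linarith, simp)
  then have "0 < K"
    by linarith
  have "0 < X"
    using f_u0(2) \<open>0 < K\<close> by (simp add: X_def)
  have "X \<le> 1"
    using f_u0(1) \<open>0 < K\<close> by (simp add: X_def)
  then have "X powr (13 * pi / sin a) \<le> 1"
    using \<open>0 < X\<close> sin_a_pos by (intro powr_le1) auto
  then have "0 < m" "2 * m \<le> 9 * K"
    using \<open>0 < K\<close> \<open>0 < X\<close> by (simp_all add: m_def)
  have m: "cmod (f u) \<le> m" if "cmod u = 1" "cos a \<le> Re u" for u
    using contra that by (auto simp: m_def X_def not_le)
  have "ln (9 * K / (2 * m)) = ln (9/4) - 13 * pi / sin a * ln X"
    using \<open>0 < K\<close> \<open>0 < X\<close> by (simp add: m_def ln_div ln_mult)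
  then have exponent: "- (ln (9 * K / (2 * m)) * sin a / (13 * pi)) = ln X - ln (9/4) * sin a / (13 * pi)"
    using sin_a_pos by (simp add: field_simps)
  moreover have "0 < ln (9/4) * sin a / (13 * pi)"
    using sin_a_pos by simp
  ultimately have "exp (- (ln (9 * K / (2 * m)) * sin a / (13 * pi))) < exp (ln X)"
    by simp
  then have "exp (- (ln (9 * K / (2 * m)) * sin a / (13 * pi))) < X"
    using \<open>0 < X\<close> by simp
  then have "72 * K * exp (- (ln (9 * K / (2 * m)) * sin a / (13 * pi))) < cmod (f u0)"
    using \<open>0 < K\<close> by (simp add: X_def field_simps)
  with two_constants[OF holf K m u0 \<open>0 < m\<close> \<open>2 * m \<le> 9 * K\<close>] show False
    by linarith
qed

lemma poly_large_on_arc: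
  fixes Q :: "complex poly"
  assumes coeff: "\<And>j. cmod (coeff Q j) \<le> M"
    and cr: "0 \<le> c" "0 < r" "c + r \<le> 1"
    and z0: "cmod (z0 - of_real c) \<le> r/2" "poly Q z0 \<noteq> 0"
    and a: "0 < a" "a < pi"
  shows "\<exists>u. cmod u = 1 \<and> cos a \<le> Re u \<and> poly Q (of_real c + of_real r * u) \<noteq> 0 \<and>
           ln (2 * M / r) - 13 * pi / sin a * ln (72 * M / (r * cmod (poly Q z0)))
             \<le> ln (cmod (poly Q (of_real c + of_real r * u)))"
proof -
  define f where "f u = poly Q (of_real c + of_real r * u)" for u
  define u0 where "u0 = (z0 - of_real c) / of_real r"
  define X where "X = cmod (poly Q z0) / (72 * (M / r))"
  have f_u0: "f u0 = poly Q z0"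
    using cr by (simp add: f_def u0_def)
  have u0: "cmod u0 \<le> 1/2"
    using z0(1) cr by (simp add: u0_def norm_divide field_simps)
  have K: "cmod (f u) * (1 - cmod u) \<le> M / r" if "cmod u < 1" for u
    unfolding f_def using norm_poly_affine_mult_one_minus_norm_le[OF coeff cr that] .
  have "0 < cmod (f u0) * (1 - cmod u0)"
    using z0(2) f_u0 u0 by simp
  then have "0 < M / r"
    using K[of u0] u0 by linarith
  then have "0 < M"
    using cr(2) by (simp add: zero_less_divide_iff)
  then have X: "0 < X"
    using z0(2) cr by (simp add: X_def)
  have "f holomorphic_on UNIV"
    unfolding f_def by (intro holomorphic_intros)
  then obtain u where u: "cmod u = 1" "cos a \<le> Re u"
    and large: "2 * (M / r) * X powr (13 * pi / sin a) \<le> cmod (f u)"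
    using holomorphic_large_on_arc[OF _ a K u0] z0(2) f_u0 by (auto simp: X_def)
  have pos: "0 < 2 * (M / r) * X powr (13 * pi / sin a)"
    using \<open>0 < M\<close> cr X by simp
  have "72 * M / (r * cmod (poly Q z0)) = inverse X"
    using cr by (simp add: X_def field_simps)
  then have "ln (2 * M / r) - 13 * pi / sin a * ln (72 * M / (r * cmod (poly Q z0)))
      = ln (2 * (M / r)) + ln (X powr (13 * pi / sin a))"
    by (simp add: ln_inverse)
  also have "\<dots> = ln (2 * (M / r) * X powr (13 * pi / sin a))"
    using \<open>0 < M\<close> cr X by (intro ln_mult_pos[symmetric]) auto
  also have "\<dots> \<le> ln (cmod (f u))"
    using large pos by (rule ln_mono)
  finally show ?thesis
    using u large pos by (intro exI[of _ u]) (auto simp: f_def)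
qed

lemma poly_large_near_centre:
  fixes Q :: "complex poly"
  assumes Q0: "cmod (coeff Q 0) = 1" and coeff: "\<And>j. cmod (coeff Q j) \<le> M"
    and nu: "0 < nu" "nu \<le> 1"
  shows "\<exists>z0. cmod (z0 - of_real (1 - nu)) \<le> nu/2 \<and> poly Q z0 \<noteq> 0 \<and>
               - ln (cmod (poly Q z0)) \<le> 12000 * ln (2 * M) / nu"
proof -
  have M: "1 \<le> M"
    using coeff[of 0] Q0 by simp
  have Q_0: "poly Q 0 \<noteq> 0" "cmod (poly Q 0) = 1"
    using Q0 by (auto simp: poly_0_coeff_0)
  show ?thesis
  proof (cases "3/4 < nu")
    \<comment> \<open>the circle of radius \<open>1 - nu\<close> would degenerate; but then 0 is already close to \<open>1 - nu\<close>\<close>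
    case True
    have "cmod (0 - of_real (1 - nu)) = 1 - nu"
      using nu(2) by (simp only: diff_0 norm_minus_cancel norm_of_real abs_of_nonneg)
    then show ?thesis
      using True Q_0 M nu(1) by (intro exI[of _ 0]) auto
  next
    case False
    define \<rho> where "\<rho> = 1 - nu"
    have \<rho>: "1/4 \<le> \<rho>" "\<rho> \<le> 1"
      using False nu by (auto simp: \<rho>_def)
    obtain u where u: "cmod u = 1" "cos (nu/2) \<le> Re u" "poly Q (of_real \<rho> * u) \<noteq> 0"
      and bound: "ln (2 * M / \<rho>) - 13 * pi / sin (nu/2) * ln (72 * M / \<rho>)
                    \<le> ln (cmod (poly Q (of_real \<rho> * u)))"
      using poly_large_on_arc[OF coeff, of 0 \<rho> 0 "nu/2"] \<rho> nu Q_0 pi_ge_two by auto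
    have "of_real \<rho> * u - of_real (1 - nu) = of_real \<rho> * (u - 1)"
      by (simp add: \<rho>_def algebra_simps)
    then have "cmod (of_real \<rho> * u - of_real (1 - nu)) = \<rho> * cmod (u - 1)"
      using \<rho> by (simp add: norm_mult)
    also have "\<dots> \<le> 1 * (nu/2)"
      using norm_minus_one_le_if_cos_le[OF u(1,2)] \<rho> nu by (intro mult_mono) auto
    finally have near: "cmod (of_real \<rho> * u - of_real (1 - nu)) \<le> nu/2"
      by simp
    have "13 * pi / sin (nu/2) \<le> 78 * pi / nu"
      using divide_sin_half_le[of "13 * pi" nu] nu by simp
    moreover have "ln (72 * M / \<rho>) \<le> 9 * ln (2 * M) / \<rho>"
      using ln_rescaled_ratio_le[OF M _ \<rho>(2), of 1 0] \<rho>(1) by simp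
    moreover have "9 * ln (2 * M) / \<rho> \<le> 36 * ln (2 * M)"
      using mult_left_mono[OF \<rho>(1), of "36 * ln (2 * M)"] \<rho> M by (simp add: field_simps)
    moreover have "0 \<le> ln (72 * M / \<rho>)"
      using M \<rho> by simp
    ultimately have "13 * pi / sin (nu/2) * ln (72 * M / \<rho>) \<le> 78 * pi / nu * (36 * ln (2 * M))"
      using nu by (intro mult_mono) auto
    moreover have "0 \<le> ln (2 * M / \<rho>)"
      using M \<rho> by simp
    ultimately have "- ln (cmod (poly Q (of_real \<rho> * u))) \<le> 78 * pi / nu * (36 * ln (2 * M))"
      using bound by linarith
    also have "\<dots> \<le> 12000 * ln (2 * M) / nu"
      using M nu pi_less_4 by (simp add: field_simps)
    finally show ?thesis
      using near u(3) by blast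
  qed
qed

lemma poly_large_on_circ_arc:
  fixes Q :: "complex poly"
  assumes Q0: "cmod (coeff Q 0) = 1" and coeff: "\<And>j. cmod (coeff Q j) \<le> M"
    and nu: "0 < nu" "nu \<le> 1" and theta: "0 < theta" "theta < pi"
  shows "\<exists>w \<in> circ_arc nu theta. poly Q w \<noteq> 0 \<and>
           - ln (cmod (poly Q w)) \<le> 10^7 * ln (2 * M) / (nu * theta)"
proof -
  define \<Lambda> where "\<Lambda> = ln (2 * M)"
  have M: "1 \<le> M"
    using coeff[of 0] Q0 by simp
  then have \<Lambda>: "ln 2 \<le> \<Lambda>"
    by (simp add: \<Lambda>_def)
  then have \<Lambda>_half: "1/2 \<le> \<Lambda>"
    using ln2_ge_two_thirds by linarith
  obtain z0 where z0: "cmod (z0 - of_real (1 - nu)) \<le> nu/2" "poly Q z0 \<noteq> 0"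
    and z0_bound: "- ln (cmod (poly Q z0)) \<le> 12000 * \<Lambda> / nu"
    using poly_large_near_centre[OF Q0 coeff nu] unfolding \<Lambda>_def by blast
  define w where "w u = of_real (1 - nu) + of_real nu * (u::complex)" for u
  obtain u where u: "cmod u = 1" "cos (theta/2) \<le> Re u" "poly Q (w u) \<noteq> 0"
    and bound: "ln (2 * M / nu) - 13 * pi / sin (theta/2) * ln (72 * M / (nu * cmod (poly Q z0)))
                  \<le> ln (cmod (poly Q (w u)))"
    using poly_large_on_arc[OF coeff _ nu(1) _ z0, of "theta/2"] nu theta
    unfolding w_def by auto
  have L: "ln (72 * M / (nu * cmod (poly Q z0))) \<le> 12009 * \<Lambda> / nu"
    using ln_rescaled_ratio_le[OF M nu _ z0_bound[unfolded \<Lambda>_def]] z0(2)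
    unfolding \<Lambda>_def by simp
  have e: "13 * pi / sin (theta/2) \<le> 78 * pi / theta" "0 \<le> 13 * pi / sin (theta/2)"
    using divide_sin_half_le[of "13 * pi" theta] theta pi_less_4 sin_gt_zero[of "theta/2"] by auto
  have "1 \<le> 2 * M / nu"
    using M nu by (simp add: le_divide_eq)
  then have "0 \<le> ln (2 * M / nu)"
    by (rule ln_ge_zero)
  then have "- ln (cmod (poly Q (w u))) \<le> 13 * pi / sin (theta/2) * (12009 * \<Lambda> / nu)"
    using bound mult_left_mono[OF L e(2)] by linarith
  also have "\<dots> \<le> 78 * pi / theta * (12009 * \<Lambda> / nu)"
    using e \<Lambda>_half nu by (intro mult_right_mono) auto
  also have "\<dots> \<le> 10^7 * \<Lambda> / (nu * theta)"
    using pi_less_4 \<Lambda>_half nu theta by (simp add: field_simps)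
  finally have "- ln (cmod (poly Q (w u))) \<le> 10^7 * \<Lambda> / (nu * theta)" .
  moreover have "w u \<in> circ_arc nu theta"
    using unit_circle_eq_cis_if_cos_le[OF u(1,2)] theta by (auto simp: w_def circ_arc_def)
  ultimately show ?thesis
    using u(3) unfolding \<Lambda>_def by blast
qed

theorem corollary5p8:
  shows "\<exists>C::real. C > 0 \<and>
    (\<forall>(Q::complex poly) (M::real) (nu::real) (theta::real).
       norm (coeff Q 0) = 1 \<longrightarrow> (\<forall>j. norm (coeff Q j) \<le> M) \<longrightarrow>
       0 < nu \<longrightarrow> nu \<le> 1 \<longrightarrow> 0 < theta \<longrightarrow> theta < pi \<longrightarrow>
       (\<exists>w \<in> circ_arc nu theta. norm (poly Q w) \<ge> (2 * M) powr (- C / (nu * theta))))"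
proof (intro exI[of _ "10^7"] conjI allI impI)
  show "(0::real) < 10^7"
    by simp
next
  fix Q :: "complex poly" and M nu theta :: real
  assume Q0: "norm (coeff Q 0) = 1" and coeff: "\<forall>j. norm (coeff Q j) \<le> M"
    and "0 < nu" "nu \<le> 1" "0 < theta" "theta < pi"
  then obtain w where w: "w \<in> circ_arc nu theta" "poly Q w \<noteq> 0"
    and bound: "- ln (cmod (poly Q w)) \<le> 10^7 * ln (2 * M) / (nu * theta)"
    using poly_large_on_circ_arc[of Q M nu theta] by blast
  have "1 \<le> M"
    using coeff Q0 by (metis order_refl order_trans)
  then have "(2 * M) powr (- (10^7) / (nu * theta)) = exp (- (10^7 * ln (2 * M) / (nu * theta)))"
    by (simp add: powr_def)
  also have "\<dots> \<le> cmod (poly Q w)"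
    using bound w(2) by (subst ln_ge_iff[symmetric]) auto
  finally show "\<exists>w \<in> circ_arc nu theta. norm (poly Q w) \<ge> (2 * M) powr (- (10^7) / (nu * theta))"
    using w(1) by blast
qed

end
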